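(* Let $n\ge 2$ and let $C_n$ be the cycle graph with vertices $p_1,\dots,p_n$ and edges $e_i$ joining $p_i$ and $p_{i+1}$ (indices mod $n$). For each $i$ let $G_i$ be a connected graph with two given distinct vertices $s_i,t_i$. Let $CG_n$ be the graph obtained from $C_n$ by replacing each edge $e_i$ by a copy of $G_i$, identifying $s_i$ with $p_i$ and $t_i$ with $p_{i+1}$ (the copies being otherwise disjoint). Then $$t(CG_n)=\prod_{i=1}^n t(G_i)\sum_{i=1}^n\frac{t(G_{i,s_it_i})}{t(G_i)},$$ where $G_{i,s_it_i}$ is obtained from $G_i$ by identifying $s_i$ and $t_i$. In particular, if each $G_i$ is a copy of the same graph $G$ with fixed vertices $s,t$, then $t(CG_n)=n\,t(G)^{n-1}\,t(G_{st})$.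
   Context: Graphs are finite and may have multiple edges and loops; $t(H)$ is the number of spanning trees of $H$ (a one-vertex graph has $t=1$). $G_{st}$ is obtained from $G$ by identifying $s$ and $t$. *)

theory Defs
  imports Complex_Main
begin

text \<open>A finite multigraph (loops and parallel edges allowed): a vertex set, an edge set,
  and an endpoint map assigning each edge its (unordered) pair of ends.\<close>
type_synonym ('v,'e) mgraph = "'v set \<times> 'e set \<times> ('e \<Rightarrow> 'v \<times> 'v)"

definition verts :: "('v,'e) mgraph \<Rightarrow> 'v set" where "verts G = fst G"
definition edges :: "('v,'e) mgraph \<Rightarrow> 'e set" where "edges G = fst (snd G)"
definition ends :: "('v,'e) mgraph \<Rightarrow> 'e \<Rightarrow> 'v \<times> 'v" where "ends G = snd (snd G)"

definition wf_graph :: "('v,'e) mgraph \<Rightarrow> bool" where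
  "wf_graph G \<longleftrightarrow> finite (verts G) \<and> finite (edges G) \<and>
     (\<forall>e\<in>edges G. fst (ends G e) \<in> verts G \<and> snd (ends G e) \<in> verts G)"

definition adj :: "('e \<Rightarrow> 'v \<times> 'v) \<Rightarrow> 'e set \<Rightarrow> 'v \<Rightarrow> 'v \<Rightarrow> bool" where
  "adj en F u v \<longleftrightarrow> (\<exists>e\<in>F. en e = (u,v) \<or> en e = (v,u))"

definition linked :: "('e \<Rightarrow> 'v \<times> 'v) \<Rightarrow> 'e set \<Rightarrow> 'v \<Rightarrow> 'v \<Rightarrow> bool" where
  "linked en F u v \<longleftrightarrow> (adj en F)\<^sup>*\<^sup>* u v"

definition connected_graph :: "('v,'e) mgraph \<Rightarrow> bool" where
  "connected_graph G \<longleftrightarrow> (\<forall>u\<in>verts G. \<forall>v\<in>verts G. linked (ends G) (edges G) u v)"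

text \<open>A spanning tree, given by its edge set T: the spanning subgraph (verts G, T) is connected
  and acyclic (no edge lies on a cycle, i.e. its ends are not linked without it; this
  excludes loops and parallel edges).\<close>
definition is_spanning_tree :: "('v,'e) mgraph \<Rightarrow> 'e set \<Rightarrow> bool" where
  "is_spanning_tree G T \<longleftrightarrow> T \<subseteq> edges G \<and>
     (\<forall>u\<in>verts G. \<forall>v\<in>verts G. linked (ends G) T u v) \<and>
     (\<forall>e\<in>T. \<not> linked (ends G) (T - {e}) (fst (ends G e)) (snd (ends G e)))"

definition num_spanning_trees :: "('v,'e) mgraph \<Rightarrow> nat" where
  "num_spanning_trees G = card {T. is_spanning_tree G T}"

definition identify :: "('v,'e) mgraph \<Rightarrow> 'v \<Rightarrow> 'v \<Rightarrow> ('v,'e) mgraph" where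
  "identify G s t =
     (let f = (\<lambda>x. if x = t then s else x)
      in (verts G - {t}, edges G, \<lambda>e. map_prod f f (ends G e)))"

text \<open>Cycle gluing CG_n (indices 0..n-1): the cycle vertex p_i is Inl i; the edge e_i
  (joining p_i and p_{(i+1) mod n}) is replaced by a copy of G i with s i glued to p_i and
  t i glued to p_{(i+1) mod n}; the other vertices of the copy are Inr (i,v).\<close>
definition glue_vert :: "nat \<Rightarrow> (nat \<Rightarrow> 'v) \<Rightarrow> (nat \<Rightarrow> 'v) \<Rightarrow> nat \<Rightarrow> 'v \<Rightarrow> nat + (nat \<times> 'v)" where
  "glue_vert n s t i v =
     (if v = s i then Inl i else if v = t i then Inl (Suc i mod n) else Inr (i, v))"

definition cycle_glue :: "nat \<Rightarrow> (nat \<Rightarrow> ('v,'e) mgraph) \<Rightarrow> (nat \<Rightarrow> 'v) \<Rightarrow> (nat \<Rightarrow> 'v)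
    \<Rightarrow> (nat + (nat \<times> 'v), nat \<times> 'e) mgraph" where
  "cycle_glue n G s t =
     ({Inl i | i. i < n} \<union> {Inr (i, v) | i v. i < n \<and> v \<in> verts (G i) - {s i, t i}},
      {(i, e) | i e. i < n \<and> e \<in> edges (G i)},
      \<lambda>(i, e). map_prod (glue_vert n s t i) (glue_vert n s t i) (ends (G i) e))"

end

(* A spanning tree T of CG_n restricts on each copy G_i to an st-forest: a forest of G_i in which
   every vertex is linked to s_i or t_i. Call copy i broken if s_i and t_i lie in different
   components of this restriction. Exactly one copy is broken: if two copies i and j were broken,
   the arc of the cycle from p_(i+1) to p_j would be cut off from p_i; if none were, going once
   around the cycle would close a cycle of T. Conversely, st-forests on all copies with exactly one
   broken copy always glue to a spanning tree of CG_n. The unbroken st-forests of G_i are its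
   spanning trees and the broken ones are the spanning trees of G_(i,s_i t_i), so
   t(CG_n) = sum_k t(G_(k,s_k t_k)) prod_(i <> k) t(G_i), which is the claimed formula. *)

theory Submission
  imports Defs "HOL-Library.FuncSet"
begin

section \<open>Linkage along edge sets\<close>

abbreviation joins :: "('e \<Rightarrow> 'v \<times> 'v) \<Rightarrow> 'e \<Rightarrow> 'v \<Rightarrow> 'v \<Rightarrow> bool" where
  "joins en e a b \<equiv> en e = (a, b) \<or> en e = (b, a)"

lemma linked_refl [simp]: "linked en F u u"
  by (simp add: linked_def)

lemma linked_trans: "linked en F u v \<Longrightarrow> linked en F v w \<Longrightarrow> linked en F u w"
  unfolding linked_def by (rule rtranclp_trans)

lemma linked_sym: "linked en F u v \<Longrightarrow> linked en F v u"
  unfolding linked_def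
proof (induction rule: rtranclp_induct)
  case (step y z)
  then have "adj en F z y" by (auto simp: adj_def)
  then show ?case using step.IH by (rule converse_rtranclp_into_rtranclp)
qed simp

lemma linked_joins: "e \<in> F \<Longrightarrow> joins en e a b \<Longrightarrow> linked en F a b"
  unfolding linked_def adj_def by blast

lemma linked_ends: "e \<in> F \<Longrightarrow> linked en F (fst (en e)) (snd (en e))"
  by (rule linked_joins[of e F en]) simp_all

lemma linked_ends_iff:
  "e \<in> F \<Longrightarrow> linked en F x (fst (en e)) \<longleftrightarrow> linked en F x (snd (en e))"
  by (meson linked_ends linked_sym linked_trans)

lemma linked_mono: "F \<subseteq> F' \<Longrightarrow> linked en F u v \<Longrightarrow> linked en F' u v"
  unfolding linked_def adj_def by (erule rtranclp_mono[THEN predicate2D, rotated]) blast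

lemma linked_empty: "linked en {} u v \<Longrightarrow> u = v"
  unfolding linked_def adj_def by (induction rule: rtranclp_induct) auto

lemma linked_map:
  assumes "\<And>e. e \<in> F \<Longrightarrow> g e \<in> F' \<and> en' (g e) = map_prod h h (en e)"
    and "linked en F u v"
  shows "linked en' F' (h u) (h v)"
  using assms(2) unfolding linked_def
proof (induction rule: rtranclp_induct)
  case (step y z)
  then obtain e where "e \<in> F" "joins en e y z" by (auto simp: adj_def)
  with assms(1) have "adj en' F' (h y) (h z)" unfolding adj_def by force
  with step.IH show ?case by (rule rtranclp.rtrancl_into_rtrancl)
qed simp

lemma linked_invariant:
  assumes "\<And>e. e \<in> F \<Longrightarrow> L (fst (en e)) = L (snd (en e))"
    and "linked en F u v"
  shows "L u = L v"
  using assms(2) unfolding linked_def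
proof (induction rule: rtranclp_induct)
  case (step y z)
  then obtain e where "e \<in> F" "joins en e y z" by (auto simp: adj_def)
  with assms(1)[of e] step.IH show ?case by auto
qed simp

lemma linked_remove_edge_cases:
  assumes "linked en F u v"
  shows "linked en (F - {e}) u v \<or>
    (\<exists>a b. joins en e a b \<and> linked en (F - {e}) u a \<and> linked en (F - {e}) b v)"
  using assms unfolding linked_def[of en F]
proof (induction rule: rtranclp_induct)
  case (step y z)
  then obtain e' where e': "e' \<in> F" "joins en e' y z" by (auto simp: adj_def)
  show ?case
  proof (cases "e' = e")
    case True
    from step.IH show ?thesis
    proof
      assume "linked en (F - {e}) u y"
      with e' True show ?thesis by (metis linked_refl)
    next
      assume "\<exists>a b. joins en e a b \<and> linked en (F - {e}) u a \<and> linked en (F - {e}) b y"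
      then obtain a b where ab: "joins en e a b" "linked en (F - {e}) u a" "linked en (F - {e}) b y"
        by blast
      from ab(1) e'(2) True have "(a = y \<and> b = z) \<or> (a = z \<and> b = y)" by auto
      with ab show ?thesis by (metis linked_refl)
    qed
  next
    case False
    with e' have "linked en (F - {e}) y z" by (intro linked_joins[of e']) auto
    with step.IH show ?thesis by (meson linked_trans)
  qed
qed simp

lemma linked_through_edge:
  assumes "finite F" "linked en F u v" "u \<noteq> v"
  obtains e a b where "e \<in> F" "joins en e a b"
    "linked en (F - {e}) u a" "linked en (F - {e}) b v"
  using assms
proof (induction "card F" arbitrary: F rule: less_induct)
  case less
  show ?case
  proof (cases "\<exists>e\<in>F. linked en (F - {e}) u v")
    case True
    then obtain e where e: "e \<in> F" "linked en (F - {e}) u v" by blast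
    show ?thesis
    proof (rule less.hyps[of "F - {e}"])
      fix e' a b
      assume "e' \<in> F - {e}" "joins en e' a b"
        "linked en (F - {e} - {e'}) u a" "linked en (F - {e} - {e'}) b v"
      moreover have "F - {e} - {e'} \<subseteq> F - {e'}" by blast
      ultimately show thesis using less.prems(1) by (meson DiffD1 linked_mono)
    qed (use e less.prems card_Diff1_less[of F e] in auto)
  next
    case False
    have "F \<noteq> {}" using less.prems(3,4) by (metis linked_empty)
    then obtain e where e: "e \<in> F" by blast
    then obtain a b where "joins en e a b" "linked en (F - {e}) u a" "linked en (F - {e}) b v"
      using linked_remove_edge_cases[OF less.prems(3), of e] False by blast
    with e show ?thesis by (rule less.prems(1))
  qed
qed

section \<open>Spanning trees, st-forests and identification of two vertices\<close>

definition forest :: "('e \<Rightarrow> 'v \<times> 'v) \<Rightarrow> 'e set \<Rightarrow> bool" where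
  "forest en F \<longleftrightarrow> (\<forall>e\<in>F. \<not> linked en (F - {e}) (fst (en e)) (snd (en e)))"

lemma forest_not_linked_Diff:
  assumes "forest en F" "e \<in> F" "joins en e a b"
  shows "\<not> linked en (F - {e}) a b"
  using assms unfolding forest_def by (metis fst_conv snd_conv linked_sym)

lemma is_spanning_tree_iff:
  "is_spanning_tree G T \<longleftrightarrow>
     T \<subseteq> edges G \<and> (\<forall>u\<in>verts G. \<forall>v\<in>verts G. linked (ends G) T u v) \<and> forest (ends G) T"
  by (simp add: is_spanning_tree_def forest_def)

lemma spanning_tree_exists:
  assumes "finite F" "F \<subseteq> edges G" "\<forall>u\<in>verts G. \<forall>v\<in>verts G. linked (ends G) F u v"
  shows "\<exists>T\<subseteq>F. is_spanning_tree G T"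
  using assms
proof (induction "card F" arbitrary: F rule: less_induct)
  case less
  show ?case
  proof (cases "forest (ends G) F")
    case True
    with less.prems show ?thesis by (auto simp: is_spanning_tree_iff)
  next
    case False
    then obtain e where e: "e \<in> F" "linked (ends G) (F - {e}) (fst (ends G e)) (snd (ends G e))"
      by (auto simp: forest_def)
    have "linked (ends G) (F - {e}) u v" if "u \<in> verts G" "v \<in> verts G" for u v
    proof -
      have "joins (ends G) e a b \<Longrightarrow> linked (ends G) (F - {e}) a b" for a b
        using e(2) by (auto dest: linked_sym)
      then show ?thesis
        using linked_remove_edge_cases[of "ends G" F u v e] less.prems(3) that
        by (meson linked_trans)
    qed
    moreover have "card (F - {e}) < card F" using less.prems(1) e(1) by (rule card_Diff1_less)
    ultimately obtain T where "T \<subseteq> F - {e}" "is_spanning_tree G T"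
      using less.hyps[of "F - {e}"] less.prems(1,2) by blast
    then show ?thesis by blast
  qed
qed

lemma num_spanning_trees_pos:
  assumes "wf_graph G" "connected_graph G"
  shows "num_spanning_trees G > 0"
proof -
  have "{T. is_spanning_tree G T} \<subseteq> Pow (edges G)"
    by (auto simp: is_spanning_tree_def)
  then have "finite {T. is_spanning_tree G T}"
    using assms(1) by (simp add: finite_subset wf_graph_def)
  moreover have "{T. is_spanning_tree G T} \<noteq> {}"
    using spanning_tree_exists[of "edges G" G] assms by (auto simp: wf_graph_def connected_graph_def)
  ultimately show ?thesis by (simp add: num_spanning_trees_def card_gt_0_iff)
qed

abbreviation linked_terminal :: "('e \<Rightarrow> 'v \<times> 'v) \<Rightarrow> 'e set \<Rightarrow> 'v \<Rightarrow> 'v \<Rightarrow> 'v \<Rightarrow> bool" where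
  "linked_terminal en F s t x \<equiv> linked en F x s \<or> linked en F x t"

definition st_forest :: "('v,'e) mgraph \<Rightarrow> 'v \<Rightarrow> 'v \<Rightarrow> 'e set \<Rightarrow> bool" where
  "st_forest G s t F \<longleftrightarrow> F \<subseteq> edges G \<and> forest (ends G) F \<and>
     (\<forall>x\<in>verts G. linked_terminal (ends G) F s t x)"

lemma spanning_tree_iff_st_forest:
  assumes "s \<in> verts G" "t \<in> verts G"
  shows "is_spanning_tree G F \<longleftrightarrow> st_forest G s t F \<and> linked (ends G) F s t"
  unfolding is_spanning_tree_iff st_forest_def using assms
  by (meson linked_sym linked_trans)

definition identify_vertex :: "'v \<Rightarrow> 'v \<Rightarrow> 'v \<Rightarrow> 'v" where
  "identify_vertex s t x = (if x = t then s else x)"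

lemma identify_simps:
  "verts (identify G s t) = verts G - {t}"
  "edges (identify G s t) = edges G"
  "ends (identify G s t) e = map_prod (identify_vertex s t) (identify_vertex s t) (ends G e)"
  by (simp_all add: identify_def verts_def edges_def ends_def identify_vertex_def [abs_def] Let_def)

lemma linked_identify_iff:
  assumes "s \<noteq> t"
  shows "linked (ends (identify G s t)) F (identify_vertex s t x) (identify_vertex s t y) \<longleftrightarrow>
    linked (ends G) F x y \<or> (linked_terminal (ends G) F s t x \<and> linked_terminal (ends G) F s t y)"
    (is "?lhs \<longleftrightarrow> ?rhs")
proof
  let ?\<iota> = "identify_vertex s t"
  define L where "L v \<longleftrightarrow> linked (ends G) F x v \<or>
    (linked_terminal (ends G) F s t x \<and> linked_terminal (ends G) F s t v)" for v
  have L_\<iota>: "L (?\<iota> v) = L v" for v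
    using assms by (auto simp: L_def identify_vertex_def)
  have "L a = L b" if "linked (ends G) F a b" for a b
    using that unfolding L_def by (meson linked_sym linked_trans)
  then have "L (fst (ends (identify G s t) e)) = L (snd (ends (identify G s t) e))" if "e \<in> F" for e
    using that linked_ends[of e F "ends G"] by (simp add: identify_simps L_\<iota> split_beta)
  moreover assume ?lhs
  ultimately have "L (?\<iota> x) = L (?\<iota> y)" by (rule linked_invariant)
  then have "L x = L y" by (simp only: L_\<iota>)
  then show ?rhs by (simp add: L_def)
next
  let ?\<iota> = "identify_vertex s t"
  have map: "linked (ends (identify G s t)) F (?\<iota> u) (?\<iota> v)" if "linked (ends G) F u v" for u v
    by (rule linked_map[where g=id, OF _ that]) (simp add: identify_simps)
  have "?\<iota> s = s" "?\<iota> t = s" using assms by (simp_all add: identify_vertex_def)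
  then show "?rhs \<Longrightarrow> ?lhs" using map[of x y] map[of x s] map[of x t] map[of y s] map[of y t]
    by (metis linked_sym linked_trans)
qed

lemma forest_identify_iff:
  assumes "finite F" "s \<noteq> t"
  shows "forest (ends (identify G s t)) F \<longleftrightarrow> forest (ends G) F \<and> \<not> linked (ends G) F s t"
proof -
  let ?\<iota> = "identify_vertex s t"
  have "forest (ends (identify G s t)) F \<longleftrightarrow> (\<forall>e\<in>F.
      \<not> linked (ends (identify G s t)) (F - {e}) (?\<iota> (fst (ends G e))) (?\<iota> (snd (ends G e))))"
    by (simp add: forest_def identify_simps split_beta)
  also have "\<dots> \<longleftrightarrow> (\<forall>e\<in>F. \<not> linked (ends G) (F - {e}) (fst (ends G e)) (snd (ends G e)) \<and>
      \<not> (linked_terminal (ends G) (F - {e}) s t (fst (ends G e)) \<and>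
         linked_terminal (ends G) (F - {e}) s t (snd (ends G e))))"
    using assms(2) by (simp add: linked_identify_iff)
  also have "\<dots> \<longleftrightarrow> forest (ends G) F \<and> \<not> linked (ends G) F s t"
  proof (intro iffI conjI ballI)
    assume H: "\<forall>e\<in>F. \<not> linked (ends G) (F - {e}) (fst (ends G e)) (snd (ends G e)) \<and>
      \<not> (linked_terminal (ends G) (F - {e}) s t (fst (ends G e)) \<and>
         linked_terminal (ends G) (F - {e}) s t (snd (ends G e)))"
    then show "forest (ends G) F" by (simp add: forest_def)
    show "\<not> linked (ends G) F s t"
    proof
      assume "linked (ends G) F s t"
      then obtain e a b where "e \<in> F" "joins (ends G) e a b"
        "linked (ends G) (F - {e}) s a" "linked (ends G) (F - {e}) b t"
        using assms linked_through_edge by metis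
      with H show False by (metis fst_conv snd_conv linked_sym)
    qed
  next
    fix e assume "forest (ends G) F \<and> \<not> linked (ends G) F s t" "e \<in> F"
    then have forest: "forest (ends G) F" and not_st: "\<not> linked (ends G) F s t" by auto
    let ?a = "fst (ends G e)" and ?b = "snd (ends G e)"
    show not_ab: "\<not> linked (ends G) (F - {e}) ?a ?b"
      using forest \<open>e \<in> F\<close> by (simp add: forest_def)
    have up: "linked (ends G) F x y" if "linked (ends G) (F - {e}) x y" for x y
      using that by (rule linked_mono[rotated]) blast
    have "linked (ends G) F ?a ?b"
      using \<open>e \<in> F\<close> by (rule linked_ends)
    show "\<not> (linked_terminal (ends G) (F - {e}) s t ?a \<and> linked_terminal (ends G) (F - {e}) s t ?b)"
      using not_ab up \<open>linked (ends G) F ?a ?b\<close> not_st by (meson linked_sym linked_trans)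
  qed
  finally show ?thesis .
qed

lemma spans_identify_iff:
  assumes "s \<in> verts G" "s \<noteq> t"
  shows "(\<forall>u\<in>verts G - {t}. \<forall>v\<in>verts G - {t}. linked (ends (identify G s t)) F u v) \<longleftrightarrow>
    (\<forall>x\<in>verts G. linked_terminal (ends G) F s t x)"
proof -
  have iff: "linked (ends (identify G s t)) F u v \<longleftrightarrow> linked (ends G) F u v \<or>
      (linked_terminal (ends G) F s t u \<and> linked_terminal (ends G) F s t v)"
    if "u \<noteq> t" "v \<noteq> t" for u v
    using linked_identify_iff[OF assms(2), of G F u v] that by (simp add: identify_vertex_def)
  show ?thesis
  proof
    assume spans: "\<forall>u\<in>verts G - {t}. \<forall>v\<in>verts G - {t}. linked (ends (identify G s t)) F u v"
    show "\<forall>x\<in>verts G. linked_terminal (ends G) F s t x"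
    proof
      fix x assume "x \<in> verts G"
      show "linked_terminal (ends G) F s t x"
      proof (cases "x = t")
        case False
        with spans \<open>x \<in> verts G\<close> assms have "linked (ends (identify G s t)) F x s" by blast
        with iff[of x s] False assms(2) show ?thesis by auto
      qed simp
    qed
  qed (use iff in auto)
qed

lemma spanning_tree_identify_iff:
  assumes "wf_graph G" "s \<in> verts G" "s \<noteq> t"
  shows "is_spanning_tree (identify G s t) F \<longleftrightarrow> st_forest G s t F \<and> \<not> linked (ends G) F s t"
proof (cases "F \<subseteq> edges G")
  case True
  with assms(1) have "finite F" by (meson finite_subset wf_graph_def)
  with True assms show ?thesis
    by (auto simp: is_spanning_tree_iff st_forest_def identify_simps forest_identify_iff
        spans_identify_iff[symmetric])
qed (auto simp: is_spanning_tree_iff st_forest_def identify_simps)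

section \<open>Slices of edge sets and arcs of a cycle\<close>

lemma Image_Diff_Pair:
  "(T - {(i, e)}) `` {j} = (if j = i then T `` {j} - {e} else T `` {j})"
  by auto

lemma card_subsets_Sigma_by_slices:
  assumes "finite I" "\<And>i. i \<in> I \<Longrightarrow> A i \<subseteq> Pow (E i)"
  shows "card {T. T \<subseteq> Sigma I E \<and> (\<forall>i\<in>I. T `` {i} \<in> A i)} = (\<Prod>i\<in>I. card (A i))"
proof -
  let ?S = "{T. T \<subseteq> Sigma I E \<and> (\<forall>i\<in>I. T `` {i} \<in> A i)}"
  have "bij_betw (\<lambda>T. \<lambda>i\<in>I. T `` {i}) ?S (Pi\<^sub>E I A)"
  proof (rule bij_betw_byWitness[where f' = "Sigma I"])
    show "\<forall>T\<in>?S. Sigma I (\<lambda>i\<in>I. T `` {i}) = T" by auto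
    show "\<forall>f\<in>Pi\<^sub>E I A. (\<lambda>i\<in>I. Sigma I f `` {i}) = f"
      by (auto simp: PiE_def extensional_def fun_eq_iff)
    show "(\<lambda>T. \<lambda>i\<in>I. T `` {i}) ` ?S \<subseteq> Pi\<^sub>E I A" by auto
    have "Sigma I f \<in> ?S" if f: "f \<in> Pi\<^sub>E I A" for f
    proof -
      have "Sigma I f `` {i} = f i" if "i \<in> I" for i using that by auto
      moreover have "f i \<subseteq> E i" if "i \<in> I" for i using assms(2) f that by blast
      ultimately show ?thesis using f by auto
    qed
    then show "Sigma I ` Pi\<^sub>E I A \<subseteq> ?S" by blast
  qed
  then show ?thesis
    using assms(1) by (simp add: bij_betw_same_card card_PiE)
qed

lemma cycle_reach_avoiding:
  assumes "transp R" "\<And>x. R x x" "k < n" "p < n"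
    and step: "\<And>c. c < n \<Longrightarrow> c \<noteq> k \<Longrightarrow> R c (Suc c mod n)"
  shows "R (Suc k mod n) p"
proof -
  have reach: "R (Suc k mod n) ((Suc k + m) mod n)" if "m < n" for m
    using that
  proof (induction m)
    case (Suc m)
    define c where "c = (Suc k + m) mod n"
    have "c < n" using assms(3) by (simp add: c_def)
    have "c \<noteq> k"
    proof
      assume "c = k"
      show False
      proof (cases "Suc k + m < n")
        case True
        with \<open>c = k\<close> show False by (simp add: c_def)
      next
        case False
        then have "c = Suc k + m - n"
          using Suc.prems assms(3) by (simp add: c_def le_mod_geq)
        with \<open>c = k\<close> \<open>\<not> Suc k + m < n\<close> Suc.prems show False by simp
      qed
    qed
    have "R (Suc k mod n) c" using Suc by (simp add: c_def)
    moreover have "R c ((Suc k + Suc m) mod n)"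
      using step[OF \<open>c < n\<close> \<open>c \<noteq> k\<close>] by (simp add: c_def mod_Suc_eq)
    ultimately show ?case by (rule transpD[OF assms(1)])
  qed (simp add: assms(2))
  have "(Suc k + (p + n - Suc k) mod n) mod n = (Suc k + (p + n - Suc k)) mod n"
    by (rule mod_add_right_eq)
  also have "\<dots> = p"
    using assms(3,4) by simp
  finally show ?thesis
    using reach[of "(p + n - Suc k) mod n"] assms(3) by simp
qed

lemma cycle_two_cuts:
  assumes "i < n" "j < n" "i \<noteq> j"
  obtains l :: "nat \<Rightarrow> bool"
  where "\<not> l i" "l (Suc i mod n)" "l j" "\<not> l (Suc j mod n)"
    "\<And>k. k < n \<Longrightarrow> k \<noteq> i \<Longrightarrow> k \<noteq> j \<Longrightarrow> l (Suc k mod n) = l k"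
proof
  let ?pos = "\<lambda>p. (p + n - Suc i) mod n"
  have pos: "?pos p = (if i < p then p - Suc i else p + n - Suc i)" if "p < n" for p
    using assms(1) that by (auto simp: mod_if)
  have Suc_mod: "Suc k mod n = (if Suc k = n then 0 else Suc k)" if "k < n" for k
    using that by (simp add: mod_Suc)
  \<comment> \<open>\<open>l p\<close>: the vertex \<open>p\<close> lies on the arc \<open>i + 1, ..., j\<close> of the cycle\<close>
  define l where "l p \<longleftrightarrow> ?pos p \<le> ?pos j" for p
  show "\<not> l i" "l (Suc i mod n)" "l j" "\<not> l (Suc j mod n)"
    using assms by (auto simp: l_def pos Suc_mod)
  show "l (Suc k mod n) = l k" if "k < n" "k \<noteq> i" "k \<noteq> j" for k
    using assms that by (auto simp: l_def pos Suc_mod)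
qed

section \<open>The glued cycle\<close>

locale glued_cycle =
  fixes n :: nat and G :: "nat \<Rightarrow> ('v,'e) mgraph" and s t :: "nat \<Rightarrow> 'v"
  assumes n_pos: "0 < n"
    and wf: "\<And>i. i < n \<Longrightarrow> wf_graph (G i)"
    and s_in: "\<And>i. i < n \<Longrightarrow> s i \<in> verts (G i)"
    and t_in: "\<And>i. i < n \<Longrightarrow> t i \<in> verts (G i)"
    and s_ne_t: "\<And>i. i < n \<Longrightarrow> s i \<noteq> t i"
begin

abbreviation CG :: "(nat + nat \<times> 'v, nat \<times> 'e) mgraph" where
  "CG \<equiv> cycle_glue n G s t"

abbreviation \<phi> :: "nat \<Rightarrow> 'v \<Rightarrow> nat + nat \<times> 'v" where
  "\<phi> \<equiv> glue_vert n s t"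

abbreviation broken :: "(nat \<times> 'e) set \<Rightarrow> nat \<Rightarrow> bool" where
  "broken T i \<equiv> \<not> linked (ends (G i)) (T `` {i}) (s i) (t i)"

lemma edges_CG: "edges CG = Sigma {..<n} (\<lambda>i. edges (G i))"
  by (auto simp: cycle_glue_def edges_def)

lemma ends_CG: "ends CG (i, e) = map_prod (\<phi> i) (\<phi> i) (ends (G i) e)"
  by (simp add: cycle_glue_def ends_def)

lemma glue_vert_s: "\<phi> i (s i) = Inl i"
  by (simp add: glue_vert_def)

lemma glue_vert_t:
  assumes "i < n"
  shows "\<phi> i (t i) = Inl (Suc i mod n)"
  using s_ne_t[OF assms] by (simp add: glue_vert_def)

lemma glue_vert_Inr: "\<phi> i v = Inr (j, w) \<Longrightarrow> j = i \<and> w = v"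
  by (auto simp: glue_vert_def split: if_splits)

lemma Inl_in_verts_CG: "p < n \<Longrightarrow> Inl p \<in> verts CG"
  by (simp add: cycle_glue_def verts_def)

lemma glue_vert_in_verts_CG: "i < n \<Longrightarrow> v \<in> verts (G i) \<Longrightarrow> \<phi> i v \<in> verts CG"
  by (auto simp: cycle_glue_def verts_def glue_vert_def)

lemma verts_CG_cases:
  assumes "x \<in> verts CG"
  obtains i v where "i < n" "v \<in> verts (G i)" "x = \<phi> i v"
proof -
  from assms consider (port) i where "i < n" "x = Inl i"
    | (inner) i v where "i < n" "v \<in> verts (G i) - {s i, t i}" "x = Inr (i, v)"
    by (auto simp: cycle_glue_def verts_def)
  then show thesis
  proof cases
    case port
    then show ?thesis using that s_in glue_vert_s by metis
  next
    case inner
    then show ?thesis using that[of i v] by (simp add: glue_vert_def)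
  qed
qed

lemma linked_CG_if_linked_slice:
  "linked (ends (G i)) (T `` {i}) u v \<Longrightarrow> linked (ends CG) T (\<phi> i u) (\<phi> i v)"
  by (rule linked_map[where g = "Pair i"]) (auto simp: ends_CG)

lemma linked_CG_invariant:
  assumes "T \<subseteq> edges CG"
    and "\<And>k. k < n \<Longrightarrow> L k (s k) = l k \<and> L k (t k) = l (Suc k mod n)"
    and "\<And>k e. k < n \<Longrightarrow> e \<in> T `` {k} \<Longrightarrow> L k (fst (ends (G k) e)) = L k (snd (ends (G k) e))"
    and "linked (ends CG) T x y"
  shows "case_sum l (case_prod L) x = case_sum l (case_prod L) y"
proof (rule linked_invariant[OF _ assms(4)])
  fix d assume "d \<in> T"
  with assms(1) obtain k e where d: "d = (k, e)" "k < n" "e \<in> T `` {k}"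
    by (auto simp: edges_CG)
  have "case_sum l (case_prod L) (\<phi> k v) = L k v" for v
    using assms(2)[OF d(2)] by (simp add: glue_vert_def)
  with d assms(3) show "case_sum l (case_prod L) (fst (ends CG d)) = case_sum l (case_prod L) (snd (ends CG d))"
    by (simp add: ends_CG split_beta)
qed

lemma two_broken_disconnect:
  assumes "T \<subseteq> edges CG" "i < n" "j < n" "i \<noteq> j" "broken T i" "broken T j"
  shows "\<not> linked (ends CG) T (Inl i) (Inl (Suc i mod n))"
proof
  assume linked: "linked (ends CG) T (Inl i) (Inl (Suc i mod n))"
  obtain l where l: "\<not> l i" "l (Suc i mod n)" "l j" "\<not> l (Suc j mod n)"
    "\<And>k. k < n \<Longrightarrow> k \<noteq> i \<Longrightarrow> k \<noteq> j \<Longrightarrow> l (Suc k mod n) = l k"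
    using cycle_two_cuts assms(2-4) by blast
  \<comment> \<open>everything attached to the arc \<open>i + 1, ..., j\<close>; this side is closed under \<open>T\<close>
    because copies \<open>i\<close> and \<open>j\<close> are broken\<close>
  define L where "L k v \<longleftrightarrow> (if k = i then linked (ends (G i)) (T `` {i}) (t i) v
     else if k = j then linked (ends (G j)) (T `` {j}) (s j) v else l k)" for k v
  have "L k (s k) = l k \<and> L k (t k) = l (Suc k mod n)" if "k < n" for k
    using assms(4-6) l that by (auto simp: L_def dest: linked_sym)
  moreover have "L k (fst (ends (G k) e)) = L k (snd (ends (G k) e))" if "e \<in> T `` {k}" for k e
    using linked_ends_iff[OF that] by (cases "k = i"; cases "k = j") (simp_all add: L_def)
  ultimately have "case_sum l (case_prod L) (Inl i) = case_sum l (case_prod L) (Inl (Suc i mod n))"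
    using linked_CG_invariant[OF assms(1) _ _ linked] by blast
  with l show False by simp
qed

lemma linked_slice_from_detached:
  assumes "T \<subseteq> edges CG" "i < n" "\<not> linked_terminal (ends (G i)) (T `` {i}) (s i) (t i) v"
    and "linked (ends CG) T (\<phi> i v) (\<phi> i w)"
  shows "linked (ends (G i)) (T `` {i}) v w"
proof -
  define L where "L k w \<longleftrightarrow> k = i \<and> linked (ends (G i)) (T `` {i}) v w" for k w
  have "L k (s k) = False \<and> L k (t k) = False" for k
    using assms(3) by (auto simp: L_def)
  moreover have "L k (fst (ends (G k) e)) = L k (snd (ends (G k) e))" if "e \<in> T `` {k}" for k e
    using linked_ends_iff[OF that] by (cases "k = i") (simp_all add: L_def)
  ultimately have "case_sum (\<lambda>_. False) (case_prod L) (\<phi> i v) = case_sum (\<lambda>_. False) (case_prod L) (\<phi> i w)"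
    by (intro linked_CG_invariant[where l = "\<lambda>_. False", OF assms(1) _ _ assms(4)]) auto
  moreover have "v \<noteq> s i" "v \<noteq> t i" using assms(3) by auto
  ultimately show ?thesis by (auto simp: glue_vert_def L_def split: if_splits)
qed

lemma linked_CG_slice_cases:
  assumes "T \<subseteq> edges CG" "i < n" "linked (ends CG) T (\<phi> i a) (\<phi> i b)"
  shows "linked (ends (G i)) (T `` {i}) a b \<or>
    (linked_terminal (ends (G i)) (T `` {i}) (s i) (t i) a \<and>
     linked_terminal (ends (G i)) (T `` {i}) (s i) (t i) b)"
proof -
  have "linked (ends (G i)) (T `` {i}) a b"
    if "\<not> linked_terminal (ends (G i)) (T `` {i}) (s i) (t i) a"
    using linked_slice_from_detached[OF assms(1,2) that assms(3)] .
  moreover have "linked (ends (G i)) (T `` {i}) a b"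
    if "\<not> linked_terminal (ends (G i)) (T `` {i}) (s i) (t i) b"
    using linked_slice_from_detached[OF assms(1,2) that linked_sym[OF assms(3)]] by (rule linked_sym)
  ultimately show ?thesis by blast
qed

lemma linked_ports_around:
  assumes "k < n" "p < n" "\<And>c. c < n \<Longrightarrow> c \<noteq> k \<Longrightarrow> linked (ends CG) T (Inl c) (Inl (Suc c mod n))"
  shows "linked (ends CG) T (Inl (Suc k mod n)) (Inl p)"
proof -
  have "transp (\<lambda>c d. linked (ends CG) T (Inl c) (Inl d))"
    by (auto intro: transpI linked_trans)
  then show ?thesis
    using cycle_reach_avoiding[of "\<lambda>c d. linked (ends CG) T (Inl c) (Inl d)" k n p] assms by simp
qed

lemma joins_CG: "joins (ends (G i)) e a b \<Longrightarrow> joins (ends CG) (i, e) (\<phi> i a) (\<phi> i b)"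
  by (auto simp: ends_CG)

lemma slice_subset_edges: "T \<subseteq> edges CG \<Longrightarrow> T `` {i} \<subseteq> edges (G i)"
  by (auto simp: edges_CG)

lemma forest_slice:
  assumes "forest (ends CG) T"
  shows "forest (ends (G i)) (T `` {i})"
  unfolding forest_def
proof (intro ballI notI)
  fix e assume e: "e \<in> T `` {i}"
    and "linked (ends (G i)) (T `` {i} - {e}) (fst (ends (G i) e)) (snd (ends (G i) e))"
  then have "linked (ends CG) (T - {(i, e)}) (\<phi> i (fst (ends (G i) e))) (\<phi> i (snd (ends (G i) e)))"
    by (intro linked_CG_if_linked_slice) (simp add: Image_Diff_Pair)
  moreover have "joins (ends CG) (i, e) (\<phi> i (fst (ends (G i) e))) (\<phi> i (snd (ends (G i) e)))"
    by (intro joins_CG) simp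
  ultimately show False
    using forest_not_linked_Diff[OF assms] e by blast
qed

lemma st_forest_slice:
  assumes "is_spanning_tree CG T" "i < n"
  shows "st_forest (G i) (s i) (t i) (T `` {i})"
proof -
  have T: "T \<subseteq> edges CG" "forest (ends CG) T"
    and spans: "\<forall>u\<in>verts CG. \<forall>v\<in>verts CG. linked (ends CG) T u v"
    using assms(1) by (auto simp: is_spanning_tree_iff)
  have "linked_terminal (ends (G i)) (T `` {i}) (s i) (t i) v" if "v \<in> verts (G i)" for v
  proof -
    have "linked (ends CG) T (\<phi> i v) (\<phi> i (s i))"
      using spans glue_vert_in_verts_CG assms(2) that s_in by blast
    then show ?thesis
      using linked_CG_slice_cases[OF T(1) assms(2)] by blast
  qed
  with T show ?thesis
    by (simp add: st_forest_def slice_subset_edges forest_slice)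
qed

lemma broken_unique:
  assumes "is_spanning_tree CG T" "i < n" "j < n" "broken T i" "broken T j"
  shows "i = j"
proof (rule ccontr)
  assume "i \<noteq> j"
  moreover have "T \<subseteq> edges CG" using assms(1) by (simp add: is_spanning_tree_iff)
  ultimately have "\<not> linked (ends CG) T (Inl i) (Inl (Suc i mod n))"
    using two_broken_disconnect assms(2-5) by blast
  moreover have "Inl i \<in> verts CG" "Inl (Suc i mod n) \<in> verts CG"
    using assms(2) by (auto intro: Inl_in_verts_CG)
  ultimately show False
    using assms(1) by (auto simp: is_spanning_tree_iff)
qed

lemma ports_linked_unbroken:
  assumes "i < n" "\<not> broken T i"
  shows "linked (ends CG) T (Inl i) (Inl (Suc i mod n))"
  using linked_CG_if_linked_slice[of i T "s i" "t i"] assms by (simp add: glue_vert_s glue_vert_t)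

lemma broken_exists:
  assumes "is_spanning_tree CG T"
  shows "\<exists>k<n. broken T k"
proof (rule ccontr)
  assume "\<not> ?thesis"
  then have unbroken: "\<And>k. k < n \<Longrightarrow> \<not> broken T k" by blast
  have T: "T \<subseteq> edges CG" "forest (ends CG) T"
    using assms by (auto simp: is_spanning_tree_iff)
  have "finite (T `` {0})"
    using slice_subset_edges[OF T(1)] wf[OF n_pos] by (auto simp: wf_graph_def intro: finite_subset)
  then obtain e a b where e: "e \<in> T `` {0}" "joins (ends (G 0)) e a b"
    and a: "linked (ends (G 0)) (T `` {0} - {e}) (s 0) a"
    and b: "linked (ends (G 0)) (T `` {0} - {e}) b (t 0)"
    using linked_through_edge unbroken[OF n_pos] s_ne_t[OF n_pos] by metis
  define T' where "T' = T - {(0, e)}"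
  have "linked (ends CG) T' (Inl c) (Inl (Suc c mod n))" if "c < n" "c \<noteq> 0" for c
    using ports_linked_unbroken[of c T'] unbroken[of c] that by (simp add: T'_def Image_Diff_Pair)
  then have "linked (ends CG) T' (\<phi> 0 (t 0)) (\<phi> 0 (s 0))"
    using linked_ports_around[OF n_pos n_pos] by (simp add: glue_vert_s glue_vert_t[OF n_pos])
  moreover have "linked (ends CG) T' (\<phi> 0 (s 0)) (\<phi> 0 a)" "linked (ends CG) T' (\<phi> 0 b) (\<phi> 0 (t 0))"
    using a b by (auto intro!: linked_CG_if_linked_slice simp: T'_def Image_Diff_Pair)
  ultimately have "linked (ends CG) T' (\<phi> 0 b) (\<phi> 0 a)"
    by (meson linked_trans)
  with forest_not_linked_Diff[OF T(2) _ joins_CG[OF e(2)]] e(1) show False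
    by (auto simp: T'_def dest: linked_sym)
qed

lemma spans_CG:
  assumes "\<And>i. i < n \<Longrightarrow> st_forest (G i) (s i) (t i) (T `` {i})"
    and "k < n" "\<And>i. i < n \<Longrightarrow> i \<noteq> k \<Longrightarrow> \<not> broken T i"
  shows "\<forall>u\<in>verts CG. \<forall>v\<in>verts CG. linked (ends CG) T u v"
proof -
  let ?root = "Inl (Suc k mod n)"
  have port: "linked (ends CG) T (Inl p) ?root" if "p < n" for p
    using linked_ports_around[OF assms(2) that] ports_linked_unbroken assms(3)
    by (meson linked_sym)
  have "linked (ends CG) T x ?root" if x: "x \<in> verts CG" for x
  proof -
    obtain i v where iv: "i < n" "v \<in> verts (G i)" "x = \<phi> i v"
      using verts_CG_cases[OF x] .
    with assms(1) have "linked_terminal (ends (G i)) (T `` {i}) (s i) (t i) v"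
      by (simp add: st_forest_def)
    then have "linked (ends CG) T x (Inl i) \<or> linked (ends CG) T x (Inl (Suc i mod n))"
      using linked_CG_if_linked_slice iv by (metis glue_vert_s glue_vert_t)
    then show ?thesis
      using port iv(1) by (meson linked_trans mod_less_divisor order.strict_trans1 zero_le)
  qed
  then show ?thesis by (meson linked_sym linked_trans)
qed

lemma forest_CG:
  assumes T: "T \<subseteq> edges CG" and slices: "\<And>i. i < n \<Longrightarrow> st_forest (G i) (s i) (t i) (T `` {i})"
    and k: "k < n" "broken T k"
  shows "forest (ends CG) T"
  unfolding forest_def
proof (intro ballI notI)
  fix d assume "d \<in> T"
  with T obtain i e where d: "d = (i, e)" "i < n" "e \<in> T `` {i}" by (auto simp: edges_CG)
  define T' where "T' = T - {d}"
  define a b where "a = fst (ends (G i) e)" and "b = snd (ends (G i) e)"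
  let ?F = "T `` {i}" and ?F' = "T' `` {i}"
  have F': "?F' = ?F - {e}" and T': "T' \<subseteq> edges CG" using T by (auto simp: T'_def d)
  have not_ab: "\<not> linked (ends (G i)) ?F' a b"
    using slices[OF d(2)] d(3) by (simp add: st_forest_def forest_def F' a_def b_def)
  have ab: "linked (ends (G i)) ?F a b" using d(3) by (simp add: a_def b_def linked_ends)
  assume "linked (ends CG) (T - {d}) (fst (ends CG d)) (snd (ends CG d))"
  then have L: "linked (ends CG) T' (\<phi> i a) (\<phi> i b)"
    by (simp add: T'_def d ends_CG split_beta a_def b_def)
  \<comment> \<open>both ends of \<open>e\<close> stay attached to terminals, so removing \<open>e\<close> breaks copy \<open>i\<close>;
    together with the broken copy \<open>k\<close> this cuts the cycle\<close>
  from linked_CG_slice_cases[OF T' d(2) L] not_ab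
  have "linked_terminal (ends (G i)) ?F' (s i) (t i) a" "linked_terminal (ends (G i)) ?F' (s i) (t i) b"
    by auto
  then have split: "(linked (ends (G i)) ?F' a (s i) \<and> linked (ends (G i)) ?F' b (t i)) \<or>
      (linked (ends (G i)) ?F' a (t i) \<and> linked (ends (G i)) ?F' b (s i))"
    using not_ab by (meson linked_sym linked_trans)
  have broken_i: "broken T' i" using split not_ab by (meson linked_sym linked_trans)
  have "linked (ends (G i)) ?F x y" if "linked (ends (G i)) ?F' x y" for x y
    using that F' by (intro linked_mono[of ?F' ?F]) auto
  then have "\<not> broken T i" using split ab by (meson linked_sym linked_trans)
  with k(2) have "i \<noteq> k" by blast
  then have "broken T' k" using k(2) by (simp add: T'_def d Image_Diff_Pair)
  with broken_i \<open>i \<noteq> k\<close> have "\<not> linked (ends CG) T' (Inl i) (Inl (Suc i mod n))"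
    using two_broken_disconnect[OF T' d(2) k(1)] by blast
  moreover have "linked (ends CG) T' (\<phi> i (s i)) (\<phi> i (t i))"
    using split L linked_CG_if_linked_slice[of i T'] by (meson linked_sym linked_trans)
  ultimately show False by (simp add: glue_vert_s glue_vert_t d(2))
qed

lemma spanning_tree_CG_iff:
  "is_spanning_tree CG T \<longleftrightarrow> T \<subseteq> edges CG \<and>
     (\<forall>i<n. st_forest (G i) (s i) (t i) (T `` {i})) \<and> (\<exists>!k. k < n \<and> broken T k)"
proof
  assume "is_spanning_tree CG T"
  then show "T \<subseteq> edges CG \<and> (\<forall>i<n. st_forest (G i) (s i) (t i) (T `` {i})) \<and>
      (\<exists>!k. k < n \<and> broken T k)"
    using st_forest_slice broken_exists broken_unique by (auto simp: is_spanning_tree_iff)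
next
  assume "T \<subseteq> edges CG \<and> (\<forall>i<n. st_forest (G i) (s i) (t i) (T `` {i})) \<and>
      (\<exists>!k. k < n \<and> broken T k)"
  then obtain k where "T \<subseteq> edges CG" "\<And>i. i < n \<Longrightarrow> st_forest (G i) (s i) (t i) (T `` {i})"
    "k < n" "broken T k" "\<And>i. i < n \<Longrightarrow> i \<noteq> k \<Longrightarrow> \<not> broken T i"
    by blast
  then show "is_spanning_tree CG T"
    using spans_CG forest_CG by (simp add: is_spanning_tree_iff)
qed

lemma num_spanning_trees_CG:
  "num_spanning_trees CG = (\<Sum>k<n. num_spanning_trees (identify (G k) (s k) (t k)) *
      (\<Prod>i\<in>{..<n} - {k}. num_spanning_trees (G i)))"
proof -
  define A where "A k i = {F. if i = k then is_spanning_tree (identify (G i) (s i) (t i)) F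
    else is_spanning_tree (G i) F}" for k i
  define S where "S k = {T. T \<subseteq> Sigma {..<n} (\<lambda>i. edges (G i)) \<and> (\<forall>i\<in>{..<n}. T `` {i} \<in> A k i)}"
    for k
  have A: "F \<in> A k i \<longleftrightarrow>
      st_forest (G i) (s i) (t i) F \<and> (\<not> linked (ends (G i)) F (s i) (t i) \<longleftrightarrow> i = k)"
    if "i < n" for i k F
    using that spanning_tree_iff_st_forest[OF s_in t_in] spanning_tree_identify_iff[OF wf s_in s_ne_t]
    by (auto simp: A_def)
  have "is_spanning_tree CG T \<longleftrightarrow> (\<exists>k<n. T \<in> S k)" for T
  proof -
    have "T \<in> S k \<longleftrightarrow> T \<subseteq> edges CG \<and> (\<forall>i<n. st_forest (G i) (s i) (t i) (T `` {i})) \<and>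
        (\<forall>i<n. broken T i \<longleftrightarrow> i = k)" for k
      using A by (auto simp: S_def edges_CG)
    moreover have "(\<exists>!k. k < n \<and> broken T k) \<longleftrightarrow> (\<exists>k<n. \<forall>i<n. broken T i \<longleftrightarrow> i = k)"
      by blast
    ultimately show ?thesis
      unfolding spanning_tree_CG_iff by auto
  qed
  then have "{T. is_spanning_tree CG T} = (\<Union>k<n. S k)" by blast
  moreover have "finite (S k)" for k
    using wf by (auto simp: S_def wf_graph_def intro: finite_subset[of _ "Pow (Sigma {..<n} (\<lambda>i. edges (G i)))"])
  moreover have "S k \<inter> S k' = {}" if "k < n" "k' < n" "k \<noteq> k'" for k k'
    using that A by (auto simp: S_def)
  moreover have "card (S k) = num_spanning_trees (identify (G k) (s k) (t k)) *
      (\<Prod>i\<in>{..<n} - {k}. num_spanning_trees (G i))" if "k < n" for k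
  proof -
    have "A k i \<subseteq> Pow (edges (G i))" for i
      by (auto simp: A_def is_spanning_tree_def identify_simps)
    then have "card (S k) = (\<Prod>i<n. card (A k i))"
      unfolding S_def by (simp add: card_subsets_Sigma_by_slices)
    also have "\<dots> = card (A k k) * (\<Prod>i\<in>{..<n} - {k}. card (A k i))"
      using that by (simp add: prod.remove)
    finally show ?thesis
      by (simp add: A_def num_spanning_trees_def)
  qed
  ultimately show ?thesis
    by (simp add: num_spanning_trees_def card_UN_disjoint)
qed

end

lemma prod_mult_sum_divide:
  fixes a b :: "'i \<Rightarrow> 'a :: field"
  assumes "finite I" "\<And>i. i \<in> I \<Longrightarrow> a i \<noteq> 0"
  shows "(\<Prod>i\<in>I. a i) * (\<Sum>k\<in>I. b k / a k) = (\<Sum>k\<in>I. b k * (\<Prod>i\<in>I - {k}. a i))"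
  unfolding sum_distrib_left
proof (rule sum.cong)
  fix k assume "k \<in> I"
  with assms(1) have "(\<Prod>i\<in>I. a i) = a k * (\<Prod>i\<in>I - {k}. a i)"
    by (rule prod.remove)
  with assms(2)[OF \<open>k \<in> I\<close>] show "(\<Prod>i\<in>I. a i) * (b k / a k) = b k * (\<Prod>i\<in>I - {k}. a i)"
    by simp
qed simp

theorem theorem4p12:
  fixes n :: nat
  assumes "n \<ge> 2"
  shows "(\<forall>(G :: nat \<Rightarrow> ('v,'e) mgraph) (s :: nat \<Rightarrow> 'v) t.
            (\<forall>i<n. wf_graph (G i) \<and> connected_graph (G i) \<and>
                   s i \<in> verts (G i) \<and> t i \<in> verts (G i) \<and> s i \<noteq> t i) \<longrightarrow>
            real (num_spanning_trees (cycle_glue n G s t)) =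
              (\<Prod>i<n. real (num_spanning_trees (G i))) *
              (\<Sum>i<n. real (num_spanning_trees (identify (G i) (s i) (t i)))
                        / real (num_spanning_trees (G i))))
       \<and> (\<forall>(G :: ('v,'e) mgraph) (s :: 'v) t.
            wf_graph G \<and> connected_graph G \<and> s \<in> verts G \<and> t \<in> verts G \<and> s \<noteq> t \<longrightarrow>
            num_spanning_trees (cycle_glue n (\<lambda>_. G) (\<lambda>_. s) (\<lambda>_. t)) =
              n * num_spanning_trees G ^ (n - 1) * num_spanning_trees (identify G s t))"
proof (intro conjI allI impI)
  fix G :: "nat \<Rightarrow> ('v,'e) mgraph" and s t :: "nat \<Rightarrow> 'v"
  assume G: "\<forall>i<n. wf_graph (G i) \<and> connected_graph (G i) \<and>
    s i \<in> verts (G i) \<and> t i \<in> verts (G i) \<and> s i \<noteq> t i"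
  then interpret glued_cycle n G s t
    using assms by unfold_locales auto
  have "real (num_spanning_trees (G i)) \<noteq> 0" if "i < n" for i
    using num_spanning_trees_pos G that by fastforce
  then have "(\<Prod>i<n. real (num_spanning_trees (G i))) *
      (\<Sum>i<n. real (num_spanning_trees (identify (G i) (s i) (t i))) / real (num_spanning_trees (G i)))
    = (\<Sum>k<n. real (num_spanning_trees (identify (G k) (s k) (t k))) *
      (\<Prod>i\<in>{..<n} - {k}. real (num_spanning_trees (G i))))"
    by (intro prod_mult_sum_divide) auto
  then show "real (num_spanning_trees (cycle_glue n G s t)) =
      (\<Prod>i<n. real (num_spanning_trees (G i))) *
      (\<Sum>i<n. real (num_spanning_trees (identify (G i) (s i) (t i))) / real (num_spanning_trees (G i)))"
    by (simp add: num_spanning_trees_CG)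
next
  fix G :: "('v,'e) mgraph" and s t :: 'v
  assume "wf_graph G \<and> connected_graph G \<and> s \<in> verts G \<and> t \<in> verts G \<and> s \<noteq> t"
  then interpret glued_cycle n "\<lambda>_. G" "\<lambda>_. s" "\<lambda>_. t"
    using assms by unfold_locales auto
  show "num_spanning_trees (cycle_glue n (\<lambda>_. G) (\<lambda>_. s) (\<lambda>_. t)) =
      n * num_spanning_trees G ^ (n - 1) * num_spanning_trees (identify G s t)"
    by (simp add: num_spanning_trees_CG)
qed

end
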